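(* Let $B\ge 1$ be an integer and let $x,y\in[0,1]$. Define $s(x)=\mathrm{round}(Bx)\in\{0,1,\dots,B\}$ (rounding to the nearest integer), and let $\boldsymbol{\phi}(x)\in\{0,1\}^{2B}$ be the binary vector whose coordinates $s(x), s(x)+1,\dots,s(x)+B-1$ (coordinates indexed $0,\dots,2B-1$) equal $1$ and all other coordinates equal $0$; define $s(y)$ and $\boldsymbol{\phi}(y)$ in the same way. Let $t:=|x-y|$, $t_-:=\max\{0,\,t-\tfrac1B\}$ and $t_+:=\min\{1,\,t+\tfrac1B\}$. Then $$\frac{2t_-}{1+t_-}\;\le\; d_J(\boldsymbol{\phi}(x),\boldsymbol{\phi}(y))\;\le\;\frac{2t_+}{1+t_+}.$$
   Context: For binary vectors $\mathbf{a},\mathbf{b}\in\{0,1\}^{m}$ with supports $A=\{k:a_k=1\}$ and $C=\{k:b_k=1\}$ (not both empty), the Jaccard distance is $d_J(\mathbf{a},\mathbf{b})=1-\frac{|A\cap C|}{|A\cup C|}$. The map $\boldsymbol{\phi}$ is the "Binary Encoding with Padding" of a numerical value scaled to $[0,1]$: a contiguous block of $B$ ones placed inside a vector of length $2B$ at an offset proportional to the value. *)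

theory Defs
  imports Complex_Main
begin

text \<open>Binary vectors of length m are functions nat => nat with values in {0,1}
  on the coordinates 0..m-1; the support only looks at coordinates below m.\<close>
definition support :: "nat \<Rightarrow> (nat \<Rightarrow> nat) \<Rightarrow> nat set" where
  "support m a = {k. k < m \<and> a k = 1}"

definition jaccard_dist :: "nat \<Rightarrow> (nat \<Rightarrow> nat) \<Rightarrow> (nat \<Rightarrow> nat) \<Rightarrow> real" where
  "jaccard_dist m a b =
     1 - real (card (support m a \<inter> support m b)) / real (card (support m a \<union> support m b))"

text \<open>s(x) = round(B x), rounding to nearest integer (ties rounded up, as Isabelle's round).\<close>
definition s_enc :: "nat \<Rightarrow> real \<Rightarrow> nat" where
  "s_enc B x = nat (round (real B * x))"

definition phi :: "nat \<Rightarrow> real \<Rightarrow> nat \<Rightarrow> nat" where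
  "phi B x = (\<lambda>k. if k < 2 * B \<and> s_enc B x \<le> k \<and> k < s_enc B x + B then 1 else 0)"

end

theory Submission
  imports Defs
begin

text \<open>Rounding moves B x and B y by at most 1/2 each, so the shift |s(x) - s(y)| of the two
  blocks of ones differs from B t by at most 1. Two blocks of length B shifted by d share
  B - d coordinates and cover B + d, giving d_J = 2u / (1 + u) with u = d / B; hence
  t_- \<le> u \<le> t_+, and the bounds follow because u \<mapsto> 2u / (1 + u) is increasing.\<close>

lemma s_enc_le:
  assumes "0 \<le> x" "x \<le> 1"
  shows "s_enc B x \<le> B"
proof -
  have "round (real B * x) \<le> round (real B)"
    using assms by (intro round_mono) (simp add: mult_left_le)
  then show ?thesis unfolding s_enc_def by simp
qed

lemma s_enc_round_error:
  assumes "0 \<le> x"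
  shows "\<bar>real (s_enc B x) - real B * x\<bar> \<le> 1/2"
proof -
  have "round (real B * x) \<ge> 0"
    using assms by (metis mult_nonneg_nonneg of_nat_0_le_iff round_0 round_mono)
  then have "real (s_enc B x) = of_int (round (real B * x))" unfolding s_enc_def by simp
  then show ?thesis using of_int_round_abs_le[of "real B * x"] by simp
qed

lemma support_phi:
  assumes "s_enc B x \<le> B"
  shows "support (2 * B) (phi B x) = {s_enc B x..<s_enc B x + B}"
  using assms unfolding support_def phi_def by auto

lemma jaccard_shifted_intervals:
  fixes a b n :: nat
  assumes "n > 0" and "\<bar>real a - real b\<bar> \<le> real n"
  shows "1 - real (card ({a..<a+n} \<inter> {b..<b+n})) / real (card ({a..<a+n} \<union> {b..<b+n}))
           = 2 * \<bar>real a - real b\<bar> / (real n + \<bar>real a - real b\<bar>)"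
proof -
  have ordered: "1 - real (card ({a..<a+n} \<inter> {b..<b+n})) / real (card ({a..<a+n} \<union> {b..<b+n}))
      = 2 * (real b - real a) / (real n + (real b - real a))"
    if le: "a \<le> b" and near: "b \<le> a + n" for a b
  proof -
    have "{a..<a+n} \<inter> {b..<b+n} = {b..<a+n}" and "{a..<a+n} \<union> {b..<b+n} = {a..<b+n}"
      using le near by auto
    moreover have "real (a + n - b) = real a + real n - real b" using near by simp
    moreover have "real (b + n - a) = real b + real n - real a" using le by simp
    ultimately show ?thesis using assms(1) le by (simp add: field_simps)
  qed
  show ?thesis
  proof (cases "a \<le> b")
    case True
    then show ?thesis using ordered[of a b] assms(2) by simp
  next
    case False
    then show ?thesis using ordered[of b a] assms(2)
      by (simp add: Int_commute Un_commute)
  qed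
qed

lemma jaccard_dist_phi:
  assumes "B > 0" "0 \<le> x" "x \<le> 1" "0 \<le> y" "y \<le> 1"
  defines "u \<equiv> \<bar>real (s_enc B x) - real (s_enc B y)\<bar> / real B"
  shows "jaccard_dist (2 * B) (phi B x) (phi B y) = 2 * u / (1 + u)"
proof -
  have sx: "s_enc B x \<le> B" and sy: "s_enc B y \<le> B"
    using s_enc_le assms(2-5) by auto
  then have "\<bar>real (s_enc B x) - real (s_enc B y)\<bar> \<le> real B" by linarith
  then have "jaccard_dist (2 * B) (phi B x) (phi B y) = 2 * (real B * u) / (real B + real B * u)"
    unfolding jaccard_dist_def support_phi[OF sx] support_phi[OF sy] u_def
    using jaccard_shifted_intervals assms(1) by simp
  also have "\<dots> = 2 * u / (1 + u)"
    using assms(1) by (simp add: distrib_left[of "real B" 1 u, symmetric, simplified])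
  finally show ?thesis .
qed

lemma s_enc_shift_approx:
  assumes "B > 0" "0 \<le> x" "0 \<le> y"
  shows "\<bar>\<bar>real (s_enc B x) - real (s_enc B y)\<bar> / real B - \<bar>x - y\<bar>\<bar> \<le> 1 / real B"
proof -
  have "\<bar>\<bar>real (s_enc B x) - real (s_enc B y)\<bar> - \<bar>real B * x - real B * y\<bar>\<bar> \<le> 1"
    using s_enc_round_error[OF assms(2), of B] s_enc_round_error[OF assms(3), of B] by linarith
  moreover have "\<bar>real B * x - real B * y\<bar> = real B * \<bar>x - y\<bar>"
    by (simp add: abs_mult right_diff_distrib[symmetric])
  ultimately have "\<bar>\<bar>real (s_enc B x) - real (s_enc B y)\<bar> - real B * \<bar>x - y\<bar>\<bar> / real B \<le> 1 / real B"
    by (simp add: divide_right_mono)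
  moreover have "\<bar>\<bar>real (s_enc B x) - real (s_enc B y)\<bar> - real B * \<bar>x - y\<bar>\<bar> / real B
      = \<bar>\<bar>real (s_enc B x) - real (s_enc B y)\<bar> / real B - \<bar>x - y\<bar>\<bar>"
    using assms(1) by (simp add: divide_diff_eq_iff mult.commute)
  ultimately show ?thesis by simp
qed

lemma mono_2u_over_1_plus_u:
  fixes u v :: real
  assumes "0 \<le> u" "u \<le> v"
  shows "2 * u / (1 + u) \<le> 2 * v / (1 + v)"
  using assms by (simp add: divide_simps) (simp add: algebra_simps)

theorem lemma3p1:
  fixes B :: nat and x y :: real
  assumes "B \<ge> 1" and "0 \<le> x" and "x \<le> 1" and "0 \<le> y" and "y \<le> 1"
  defines "t \<equiv> \<bar>x - y\<bar>"
  defines "tm \<equiv> max 0 (t - 1 / real B)"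
  defines "tp \<equiv> min 1 (t + 1 / real B)"
  shows "2 * tm / (1 + tm) \<le> jaccard_dist (2 * B) (phi B x) (phi B y)
         \<and> jaccard_dist (2 * B) (phi B x) (phi B y) \<le> 2 * tp / (1 + tp)"
proof -
  define u where "u = \<bar>real (s_enc B x) - real (s_enc B y)\<bar> / real B"
  have B: "B > 0" using assms(1) by simp
  have J: "jaccard_dist (2 * B) (phi B x) (phi B y) = 2 * u / (1 + u)"
    unfolding u_def using jaccard_dist_phi B assms(2-5) by blast
  have "0 \<le> u" "u \<le> 1"
    using s_enc_le[OF assms(2,3), of B] s_enc_le[OF assms(4,5), of B] B
    unfolding u_def by simp_all
  moreover have "\<bar>u - t\<bar> \<le> 1 / real B"
    unfolding u_def t_def using s_enc_shift_approx B assms(2,4) by blast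
  ultimately have "tm \<le> u" "u \<le> tp" unfolding tm_def tp_def by auto
  moreover have "0 \<le> tm" unfolding tm_def by simp
  ultimately show ?thesis unfolding J by (meson mono_2u_over_1_plus_u order_trans)
qed

end
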